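(* Let $n$ be a positive integer and $\alpha,\beta\in\mathbb{R}$. If $\lambda$ is an eigenvalue of $A_n^{\alpha,\beta}$, then \[ |\lambda|\ \le\ T_n\cdot\max\{1,n^{2\beta}\}\cdot\max_{1\le i\le n}|J_{\alpha-\beta}(i)| . \]
   Context: For $i,j$ positive integers, $(i,j)$ denotes the greatest common divisor and $[i,j]$ the least common multiple. For $\alpha,\beta\in\mathbb{R}$ and a positive integer $n$, $A_n^{\alpha,\beta}$ is the $n\times n$ real matrix with $(i,j)$ entry $(i,j)^{\alpha}[i,j]^{\beta}$. $E_n$ is the $n\times n$ matrix with $(E_n)_{ij}=1$ if $j\mid i$ and $(E_n)_{ij}=0$ otherwise; $T_n$ denotes the largest eigenvalue of the symmetric matrix $E_n^{T}E_n$. For real $s$, $J_s$ is the arithmetical function $J_s(k)=k^{s}\prod_{p\mid k}\left(1-p^{-s}\right)$ (product over primes $p$ dividing $k$), equivalently $J_s(k)=\sum_{d\mid k} d^{s}\mu(k/d)$ where $\mu$ is the Möbius function. *)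

theory Defs
  imports "HOL-Computational_Algebra.Primes" "Jordan_Normal_Form.Matrix" "Jordan_Normal_Form.Char_Poly"
begin

(* Matrices are n x n, 0-based: row/column index i corresponds to the integer i+1. *)

definition A_mat :: "real \<Rightarrow> real \<Rightarrow> nat \<Rightarrow> real mat" where
  "A_mat \<alpha> \<beta> n = mat n n (\<lambda>(i,j).
     (real (gcd (i+1) (j+1))) powr \<alpha> * (real (lcm (i+1) (j+1))) powr \<beta>)"

definition E_mat :: "nat \<Rightarrow> real mat" where
  "E_mat n = mat n n (\<lambda>(i,j). if (j+1) dvd (i+1) then 1 else 0)"

definition T_n :: "nat \<Rightarrow> real" where
  "T_n n = Max {k. eigenvalue (transpose_mat (E_mat n) * E_mat n) k}"

definition J_fun :: "real \<Rightarrow> nat \<Rightarrow> real" where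
  "J_fun s k = real k powr s * (\<Prod>p\<in>prime_factors k. (1 - real p powr (- s)))"

end

theory Submission
  imports Defs "HOL-Analysis.Function_Topology" "HOL-Analysis.Convex" "Jordan_Normal_Form.Spectral_Radius"
begin

text \<open>
  Write \<open>s = \<alpha> - \<beta>\<close>. Since \<open>m powr s\<close> is the divisor sum of \<open>J_fun s\<close> and
  \<open>lcm i j = i j / gcd i j\<close>, the entry of \<open>A\<close> at \<open>(i, j)\<close> is
  \<open>i\<^sup>\<beta> j\<^sup>\<beta> \<Sum>\<^sub>d E i d * E j d * J_fun s d\<close>, that is \<open>A = D E \<Lambda> E\<^sup>T D\<close> with diagonal matrices
  \<open>D = diag (i\<^sup>\<beta>)\<close> and \<open>\<Lambda> = diag (J_fun s d)\<close>. For an eigenvector \<open>v\<close> this gives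
  \<open>\<lambda> |v|\<^sup>2 = v\<^sup>* A v = \<Sum>\<^sub>d J_fun s d * |(E\<^sup>T D v) d|\<^sup>2\<close>, so
  \<open>|\<lambda>| |v|\<^sup>2 \<le> max |J_fun s| * |E\<^sup>T D v|\<^sup>2 \<le> max |J_fun s| * T_n * |D v|\<^sup>2\<close>, and
  \<open>|D v|\<^sup>2 \<le> max 1 (n powr 2\<beta>) * |v|\<^sup>2\<close>. The middle step is \<open>|E\<^sup>T|\<^sup>2 = |E|\<^sup>2 \<le> T_n\<close>: a maximiser
  of the Rayleigh quotient \<open>|E y|\<^sup>2 / |y|\<^sup>2\<close>, which exists by compactness of the unit sphere, is an
  eigenvector of \<open>E\<^sup>T E\<close> whose eigenvalue is the maximal quotient.
\<close>

section \<open>Divisor sums of Jordan's totient\<close>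

lemma J_fun_Suc_0 [simp]: "J_fun s (Suc 0) = 1"
  by (simp add: J_fun_def)

lemma J_fun_prime_power:
  assumes p: "prime p"
  shows "J_fun s (p ^ Suc k) = real p powr (real (Suc k) * s) - real p powr (real k * s)"
proof -
  have pos: "real p > 0"
    using prime_gt_0_nat[OF p] by simp
  have "prime_factors (p ^ Suc k) = {p}"
    using prime_factorization_prime_power[OF p, of "Suc k"] by (simp del: power_Suc)
  moreover have "real (p ^ Suc k) powr s = real p powr (real (Suc k) * s)"
  proof -
    have "real (p ^ Suc k) = real p powr real (Suc k)"
      using powr_realpow[OF pos, of "Suc k"] by (simp only: of_nat_power)
    then show ?thesis
      by (simp add: powr_powr del: of_nat_Suc)
  qed
  ultimately have "J_fun s (p ^ Suc k) = real p powr (real (Suc k) * s) * (1 - real p powr (- s))"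
    by (simp add: J_fun_def)
  also have "\<dots> = real p powr (real (Suc k) * s) - real p powr (real k * s)"
    using pos by (simp add: algebra_simps powr_add [symmetric] del: of_nat_Suc) (simp add: algebra_simps)
  finally show ?thesis .
qed

lemma sum_J_fun_prime_powers:
  assumes "prime p"
  shows "(\<Sum>i\<le>k. J_fun s (p ^ i)) = real p powr (real k * s)"
proof (induction k)
  case (Suc k)
  then show ?case
    using J_fun_prime_power[OF assms, of s k] prime_gt_0_nat[OF assms] by (simp del: power_Suc)
qed (use prime_gt_0_nat[OF assms] in simp)

lemma J_fun_mult_coprime:
  assumes "coprime a b" "a > 0" "b > 0"
  shows "J_fun s (a * b) = J_fun s a * J_fun s b"
proof -
  have "False" if "p \<in> prime_factors a" "p \<in> prime_factors b" for p
  proof -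
    have "prime p" "p dvd a" "p dvd b"
      using that by auto
    then have "p = 1"
      using coprime_common_divisor_nat[OF assms(1)] by simp
    with \<open>prime p\<close> show False
      by simp
  qed
  then have disj: "prime_factors a \<inter> prime_factors b = {}"
    by blast
  have union: "prime_factors (a * b) = prime_factors a \<union> prime_factors b"
    using assms by (simp add: prime_factors_product)
  show ?thesis
    unfolding J_fun_def union by (subst prod.union_disjoint[OF _ _ disj]) (auto simp: powr_mult)
qed

lemma sum_divisors_mult_coprime:
  fixes f :: "nat \<Rightarrow> 'a :: comm_monoid_add"
  assumes cop: "coprime a b" and "a > 0" "b > 0"
  shows "(\<Sum>d | d dvd a * b. f d) = (\<Sum>x | x dvd a. \<Sum>y | y dvd b. f (x * y))"
proof -
  have inj: "inj_on (\<lambda>(x, y). x * y) ({x. x dvd a} \<times> {y. y dvd b})"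
  proof (rule inj_onI, clarify)
    fix x y x' y' assume h: "x dvd a" "y dvd b" "x' dvd a" "y' dvd b" "x * y = x' * y'"
    have recover: "gcd (u * v) a = u" if "u dvd a" "v dvd b" for u v
      using gcd_mult_left_right_cancel[OF coprime_divisors[OF dvd_refl that(2) cop], of u]
        gcd_nat.absorb1[OF that(1)] by simp
    have "x = x'"
      using recover[OF h(1,2)] recover[OF h(3,4)] h(5) by simp
    moreover have "x > 0"
      using h(1) \<open>a > 0\<close> dvd_pos_nat by blast
    ultimately show "x = x' \<and> y = y'"
      using h(5) by simp
  qed
  have "(\<lambda>(x, y). x * y) ` ({x. x dvd a} \<times> {y. y dvd b}) = {d. d dvd a * b}"
    by (auto intro: mult_dvd_mono dest!: division_decomp)
  then have "(\<Sum>d | d dvd a * b. f d) = (\<Sum>(x, y) \<in> {x. x dvd a} \<times> {y. y dvd b}. f (x * y))"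
    using sum.reindex[OF inj, of f] by (simp add: case_prod_beta')
  also have "\<dots> = (\<Sum>x | x dvd a. \<Sum>y | y dvd b. f (x * y))"
    by (rule sum.cartesian_product [symmetric])
  finally show ?thesis .
qed

lemma sum_divisors_J_fun_prime_power:
  assumes "prime p"
  shows "(\<Sum>d | d dvd p ^ k. J_fun s d) = real (p ^ k) powr s"
proof -
  have "p > 1"
    using assms prime_gt_1_nat by blast
  have "{d. d dvd p ^ k} = (\<lambda>i. p ^ i) ` {..k}"
    using divides_primepow_nat[OF assms] by auto
  then have "(\<Sum>d | d dvd p ^ k. J_fun s d) = (\<Sum>i\<le>k. J_fun s (p ^ i))"
    using \<open>p > 1\<close> by (simp add: sum.reindex inj_on_def)
  also have "\<dots> = real p powr (real k * s)"
    by (rule sum_J_fun_prime_powers[OF assms])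
  also have "real (p ^ k) = real p powr real k"
    using \<open>p > 1\<close> powr_realpow[of "real p" k] by simp
  then have "real p powr (real k * s) = real (p ^ k) powr s"
    by (simp add: powr_powr)
  finally show ?thesis .
qed

lemma sum_divisors_J_fun_mult_coprime:
  assumes cop: "coprime a b" and "a > 0" "b > 0"
  shows "(\<Sum>d | d dvd a * b. J_fun s d) = (\<Sum>d | d dvd a. J_fun s d) * (\<Sum>d | d dvd b. J_fun s d)"
proof -
  have "(\<Sum>d | d dvd a * b. J_fun s d) = (\<Sum>x | x dvd a. \<Sum>y | y dvd b. J_fun s (x * y))"
    using assms by (rule sum_divisors_mult_coprime)
  also have "\<dots> = (\<Sum>x | x dvd a. \<Sum>y | y dvd b. J_fun s x * J_fun s y)"
    using coprime_divisors[OF _ _ cop] dvd_pos_nat[OF \<open>a > 0\<close>] dvd_pos_nat[OF \<open>b > 0\<close>]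
    by (intro sum.cong refl J_fun_mult_coprime) auto
  finally show ?thesis
    by (simp add: sum_product)
qed

lemma sum_divisors_J_fun:
  assumes "m > 0"
  shows "(\<Sum>d | d dvd m. J_fun s d) = real m powr s"
  using assms
proof (induction m rule: less_induct)
  case (less m)
  show ?case
  proof (cases "m = 1")
    case False
    then obtain p where p: "prime p" "p dvd m"
      using prime_factor_nat by blast
    define k where "k = multiplicity p m"
    have "m \<noteq> 0" "\<not> is_unit p"
      using less.prems p(1) by auto
    then obtain r where r: "m = p ^ k * r" "\<not> p dvd r"
      unfolding k_def by (rule multiplicity_decompose')
    have "k > 0"
      using prime_multiplicity_gt_zero_iff less.prems p unfolding k_def by auto
    have "p > 1"
      using p(1) prime_gt_1_nat by blast
    then have "p ^ k > 1"
      using \<open>k > 0\<close> one_less_power by blast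
    moreover have "r > 0"
      using r less.prems by (metis gr0I mult_0_right)
    ultimately have "r < m" "p ^ k > 0"
      using r(1) \<open>p > 1\<close> by simp_all
    have "coprime (p ^ k) r"
      using r(2) p by (simp add: prime_imp_coprime coprime_commute)
    then have "(\<Sum>d | d dvd m. J_fun s d) = real (p ^ k) powr s * real r powr s"
      unfolding r(1) using \<open>p ^ k > 0\<close> \<open>r > 0\<close> \<open>r < m\<close>
      by (simp add: sum_divisors_J_fun_mult_coprime sum_divisors_J_fun_prime_power p(1) less.IH
          del: of_nat_power)
    then show ?thesis
      by (simp add: r(1) powr_mult del: of_nat_power)
  qed simp
qed

section \<open>Factorisation of the matrix\<close>

definition E_entry :: "nat \<Rightarrow> nat \<Rightarrow> real" where
  "E_entry k i = (if Suc i dvd Suc k then 1 else 0)"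

lemma E_mat_eq: "E_mat n = mat n n (\<lambda>(k, i). E_entry k i)"
  by (simp add: E_mat_def E_entry_def)

lemma gcd_powr_eq_sum_E_entry:
  assumes "i < n" "j < n"
  shows "real (gcd (Suc i) (Suc j)) powr s = (\<Sum>d<n. E_entry i d * E_entry j d * J_fun s (Suc d))"
proof -
  define g where "g = gcd (Suc i) (Suc j)"
  have "g > 0"
    unfolding g_def by simp
  have "g \<le> Suc i"
    unfolding g_def by (rule dvd_imp_le[OF gcd_dvd1]) simp
  then have "g \<le> n"
    using assms(1) by simp
  have divisors: "{d. d dvd g} = Suc ` {d \<in> {..<n}. Suc d dvd g}"
  proof (intro equalityI subsetI)
    fix d assume "d \<in> {d. d dvd g}"
    then have "d dvd g" "0 < d" "d \<le> n"
      using \<open>g > 0\<close> \<open>g \<le> n\<close> dvd_imp_le[of d g] by (auto intro: Nat.gr0I)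
    then show "d \<in> Suc ` {d \<in> {..<n}. Suc d dvd g}"
      by (intro image_eqI[of _ _ "d - 1"]) auto
  qed auto
  have "real g powr s = (\<Sum>d | d dvd g. J_fun s d)"
    using sum_divisors_J_fun[OF \<open>g > 0\<close>] by simp
  also have "\<dots> = (\<Sum>d \<in> {d \<in> {..<n}. Suc d dvd g}. J_fun s (Suc d))"
    unfolding divisors by (subst sum.reindex) auto
  also have "\<dots> = (\<Sum>d<n. if Suc d dvd g then J_fun s (Suc d) else 0)"
    by (rule sum.inter_filter) simp
  also have "\<dots> = (\<Sum>d<n. E_entry i d * E_entry j d * J_fun s (Suc d))"
    by (rule sum.cong) (auto simp: g_def E_entry_def)
  finally show ?thesis
    unfolding g_def .
qed

lemma A_mat_entry_eq:
  assumes "i < n" "j < n"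
  shows "A_mat \<alpha> \<beta> n $$ (i, j) = real (Suc i) powr \<beta> * real (Suc j) powr \<beta>
     * (\<Sum>d<n. E_entry i d * E_entry j d * J_fun (\<alpha> - \<beta>) (Suc d))"
proof -
  define g where "g = real (gcd (Suc i) (Suc j))"
  have "g > 0"
    unfolding g_def by simp
  have "g * real (lcm (Suc i) (Suc j)) = real (Suc i) * real (Suc j)"
    unfolding g_def by (metis of_nat_mult prod_gcd_lcm_nat)
  then have "real (lcm (Suc i) (Suc j)) = real (Suc i) * real (Suc j) / g"
    using \<open>g > 0\<close> by (simp add: field_simps)
  then have "A_mat \<alpha> \<beta> n $$ (i, j) = g powr \<alpha> * (real (Suc i) powr \<beta> * real (Suc j) powr \<beta> / g powr \<beta>)"
    using assms by (simp add: A_mat_def g_def powr_divide powr_mult)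
  also have "\<dots> = g powr (\<alpha> - \<beta>) * (real (Suc i) powr \<beta> * real (Suc j) powr \<beta>)"
    by (simp add: powr_diff)
  finally show ?thesis
    using gcd_powr_eq_sum_E_entry[OF assms, of "\<alpha> - \<beta>"] unfolding g_def by simp
qed

section \<open>Rayleigh quotients\<close>

lemma linear_coeff_eq_0_if_quadratic_nonpos:
  fixes a b :: real
  assumes nonpos: "\<And>t. a * t + b * t\<^sup>2 \<le> 0"
  shows "a = 0"
proof (rule ccontr)
  assume "a \<noteq> 0"
  define c where "c = \<bar>b\<bar> + 1"
  have "c > 0" "c + b > 0"
    unfolding c_def by auto
  then have "a * (a / c) + b * (a / c)\<^sup>2 = a\<^sup>2 * (c + b) / c\<^sup>2"
    by (simp add: field_simps power2_eq_square)
  moreover have "a\<^sup>2 * (c + b) / c\<^sup>2 > 0"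
    using \<open>a \<noteq> 0\<close> \<open>c > 0\<close> \<open>c + b > 0\<close> by simp
  ultimately show False
    using nonpos[of "a / c"] by simp
qed

lemma continuous_attains_max_on_unit_sphere:
  fixes f :: "(nat \<Rightarrow> real) \<Rightarrow> real"
  assumes "n \<ge> 1" and cont: "continuous_on UNIV f"
  obtains x where "(\<Sum>i<n. (x i)\<^sup>2) = 1"
    "\<And>y. (\<Sum>i<n. (y i)\<^sup>2) = 1 \<Longrightarrow> (\<And>i. i \<ge> n \<Longrightarrow> y i = 0) \<Longrightarrow> f y \<le> f x"
proof -
  define S where "S = (\<lambda>i::nat. if i < n then {-1..1::real} else {0})"
  define K where "K = PiE UNIV S \<inter> {y. (\<Sum>i<n. (y i)\<^sup>2) = 1}"
  have "compact (PiE UNIV S)"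
    using compactin_PiE[of "\<lambda>i. euclidean" UNIV S]
    by (simp add: euclidean_product_topology S_def)
  moreover have "closed {y :: nat \<Rightarrow> real. (\<Sum>i<n. (y i)\<^sup>2) = 1}"
    by (intro closed_Collect_eq continuous_intros continuous_on_product_coordinates)
  ultimately have "compact K"
    unfolding K_def by blast
  define e where "e = (\<lambda>i::nat. if i = 0 then 1 else 0 :: real)"
  have "(\<Sum>i<n. (e i)\<^sup>2) = (\<Sum>i<n. if i = 0 then 1 else 0)"
    by (intro sum.cong) (auto simp: e_def)
  then have "e \<in> K"
    using \<open>n \<ge> 1\<close> by (auto simp: K_def S_def e_def)
  then obtain x where "x \<in> K" and max: "\<And>y. y \<in> K \<Longrightarrow> f y \<le> f x"
    using continuous_attains_sup[OF \<open>compact K\<close> _ continuous_on_subset[OF cont]] by blast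
  have "y \<in> K" if "(\<Sum>i<n. (y i)\<^sup>2) = 1" "\<And>i. i \<ge> n \<Longrightarrow> y i = 0" for y
  proof -
    have "(y i)\<^sup>2 \<le> 1" if "i < n" for i
      using member_le_sum[of i "{..<n}" "\<lambda>i. (y i)\<^sup>2"] that \<open>(\<Sum>i<n. (y i)\<^sup>2) = 1\<close> by simp
    then have "\<bar>y i\<bar> \<le> 1" if "i < n" for i
      using that abs_le_square_iff[of "y i" 1] by simp
    then show ?thesis
      using that by (auto simp: K_def S_def abs_le_iff not_less)
  qed
  then show ?thesis
    using that[of x] \<open>x \<in> K\<close> max unfolding K_def by blast
qed

lemma rayleigh_maximizer_exists:
  fixes b :: "nat \<Rightarrow> nat \<Rightarrow> real"
  assumes "n \<ge> 1"
  obtains x where "(\<Sum>i<n. (x i)\<^sup>2) = 1"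
    "\<And>z. (\<Sum>k<m. (\<Sum>i<n. b k i * z i)\<^sup>2) \<le> (\<Sum>k<m. (\<Sum>i<n. b k i * x i)\<^sup>2) * (\<Sum>i<n. (z i)\<^sup>2)"
proof -
  define Q where "Q = (\<lambda>y. \<Sum>k<m. (\<Sum>i<n. b k i * y i)\<^sup>2)"
  have "continuous_on UNIV Q"
    unfolding Q_def by (intro continuous_intros continuous_on_product_coordinates)
  then obtain x where x: "(\<Sum>i<n. (x i)\<^sup>2) = 1"
    and max: "\<And>y. (\<Sum>i<n. (y i)\<^sup>2) = 1 \<Longrightarrow> (\<And>i. i \<ge> n \<Longrightarrow> y i = 0) \<Longrightarrow> Q y \<le> Q x"
    using continuous_attains_max_on_unit_sphere[OF assms] by blast
  have "Q z \<le> Q x * (\<Sum>i<n. (z i)\<^sup>2)" for z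
  proof (cases "\<forall>i<n. z i = 0")
    case True
    then show ?thesis
      by (simp add: Q_def)
  next
    case False
    then obtain i where "i < n" "z i \<noteq> 0"
      by blast
    define N where "N = (\<Sum>i<n. (z i)\<^sup>2)"
    have "N > 0"
      unfolding N_def using \<open>i < n\<close> \<open>z i \<noteq> 0\<close> by (intro sum_pos2[of _ i]) auto
    define r where "r = sqrt N"
    have "r > 0" "r\<^sup>2 = N"
      using \<open>N > 0\<close> by (simp_all add: r_def)
    define z' where "z' = (\<lambda>i. if i < n then z i / r else 0)"
    \<comment> \<open>both sides are homogeneous of degree 2 in \<open>z\<close>\<close>
    have scale: "(\<Sum>i<n. b k i * z' i) = (\<Sum>i<n. b k i * z i) / r" for k
      by (simp add: z'_def sum_divide_distrib)
    have "Q z' = Q z / r\<^sup>2"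
      unfolding Q_def scale power_divide by (rule sum_divide_distrib[symmetric])
    moreover have "(\<Sum>i<n. (z' i)\<^sup>2) = N / r\<^sup>2"
      by (simp add: z'_def N_def power_divide sum_divide_distrib)
    ultimately have "Q z / N \<le> Q x"
      using max[of z'] \<open>r > 0\<close> \<open>r\<^sup>2 = N\<close> \<open>N > 0\<close> by (simp add: z'_def)
    then show ?thesis
      using \<open>N > 0\<close> by (simp add: N_def divide_le_eq mult.commute)
  qed
  then show ?thesis
    using that x unfolding Q_def by blast
qed

lemma sum_sq_add_scaled:
  fixes v h :: "'a \<Rightarrow> real"
  shows "(\<Sum>k\<in>A. (v k + t * h k)\<^sup>2)
    = (\<Sum>k\<in>A. (v k)\<^sup>2) + 2 * t * (\<Sum>k\<in>A. v k * h k) + t\<^sup>2 * (\<Sum>k\<in>A. (h k)\<^sup>2)"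
  by (simp add: power2_sum algebra_simps sum.distrib sum_distrib_left)

lemma rayleigh_maximizer_orthogonality:
  fixes b :: "nat \<Rightarrow> nat \<Rightarrow> real"
  assumes max: "\<And>z. (\<Sum>k<m. (\<Sum>i<n. b k i * z i)\<^sup>2) \<le> \<mu> * (\<Sum>i<n. (z i)\<^sup>2)"
    and \<mu>: "(\<Sum>k<m. (\<Sum>i<n. b k i * x i)\<^sup>2) = \<mu> * (\<Sum>i<n. (x i)\<^sup>2)"
  shows "(\<Sum>k<m. (\<Sum>i<n. b k i * x i) * (\<Sum>i<n. b k i * g i)) = \<mu> * (\<Sum>i<n. x i * g i)"
proof -
  \<comment> \<open>the quotient cannot increase along \<open>x + t g\<close>, so its derivative at \<open>t = 0\<close> vanishes\<close>
  have "(2 * ((\<Sum>k<m. (\<Sum>i<n. b k i * x i) * (\<Sum>i<n. b k i * g i)) - \<mu> * (\<Sum>i<n. x i * g i))) * t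
      + ((\<Sum>k<m. (\<Sum>i<n. b k i * g i)\<^sup>2) - \<mu> * (\<Sum>i<n. (g i)\<^sup>2)) * t\<^sup>2 \<le> 0" for t
  proof -
    have "(\<Sum>i<n. b k i * (x i + t * g i)) = (\<Sum>i<n. b k i * x i) + t * (\<Sum>i<n. b k i * g i)" for k
      by (simp add: algebra_simps sum.distrib sum_distrib_left)
    then have "(\<Sum>k<m. ((\<Sum>i<n. b k i * x i) + t * (\<Sum>i<n. b k i * g i))\<^sup>2)
        \<le> \<mu> * (\<Sum>i<n. (x i + t * g i)\<^sup>2)"
      using max[of "\<lambda>i. x i + t * g i"] by simp
    then show ?thesis
      unfolding sum_sq_add_scaled \<mu> by (simp add: algebra_simps)
  qed
  then show ?thesis
    using linear_coeff_eq_0_if_quadratic_nonpos by fastforce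
qed

lemma rayleigh_maximizer_eigenvector:
  fixes b :: "nat \<Rightarrow> nat \<Rightarrow> real"
  assumes max: "\<And>z. (\<Sum>k<m. (\<Sum>i<n. b k i * z i)\<^sup>2) \<le> \<mu> * (\<Sum>i<n. (z i)\<^sup>2)"
    and \<mu>: "(\<Sum>k<m. (\<Sum>i<n. b k i * x i)\<^sup>2) = \<mu> * (\<Sum>i<n. (x i)\<^sup>2)"
    and "j < n"
  shows "(\<Sum>k<m. b k j * (\<Sum>i<n. b k i * x i)) = \<mu> * x j"
proof -
  define v where "v k = (\<Sum>i<n. b k i * x i)" for k
  define y where "y i = (\<Sum>k<m. b k i * v k)" for i
  define g where "g i = y i - \<mu> * x i" for i
  have "(\<Sum>i<n. g i * y i) = (\<Sum>k<m. v k * (\<Sum>i<n. b k i * g i))"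
    unfolding y_def by (simp add: sum_distrib_left sum_distrib_right mult_ac sum.swap[of _ "{..<m}"])
  also have "\<dots> = \<mu> * (\<Sum>i<n. x i * g i)"
    unfolding v_def by (rule rayleigh_maximizer_orthogonality[OF max \<mu>])
  finally have "(\<Sum>i<n. g i * g i) = 0"
    by (simp add: g_def algebra_simps sum_subtractf sum_distrib_left)
  then have "g j = 0"
    using \<open>j < n\<close> by (simp add: sum_nonneg_eq_0_iff)
  then show ?thesis
    unfolding g_def y_def v_def by simp
qed

lemma eigenvalue_transpose_mult_matI:
  fixes b :: "nat \<Rightarrow> nat \<Rightarrow> real" and x :: "nat \<Rightarrow> real"
  assumes "i < n" "x i \<noteq> 0"
    and eq: "\<And>j. j < n \<Longrightarrow> (\<Sum>k<m. b k j * (\<Sum>i<n. b k i * x i)) = \<mu> * x j"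
  shows "eigenvalue (transpose_mat (mat m n (\<lambda>(k, i). b k i)) * mat m n (\<lambda>(k, i). b k i)) \<mu>"
  unfolding eigenvalue_def eigenvector_def
proof (intro exI[of _ "vec n x"] conjI)
  define B where "B = mat m n (\<lambda>(k, i). b k i)"
  show "vec n x \<in> carrier_vec (dim_row (transpose_mat B * B))"
    by (simp add: B_def)
  show "vec n x \<noteq> 0\<^sub>v (dim_row (transpose_mat B * B))"
    using assms(1,2) by (auto simp: B_def dest!: arg_cong[of _ _ "\<lambda>v. v $ i"])
  have "(transpose_mat B * B *\<^sub>v vec n x) $ j = \<mu> * x j" if "j < n" for j
  proof -
    have "(transpose_mat B * B *\<^sub>v vec n x) $ j = (\<Sum>i<n. (\<Sum>k<m. b k j * b k i) * x i)"
      using that by (simp add: B_def mult_mat_vec_def scalar_prod_def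
          lessThan_atLeast0 sum_distrib_left)
    also have "\<dots> = (\<Sum>k<m. b k j * (\<Sum>i<n. b k i * x i))"
      by (simp add: sum_distrib_left sum_distrib_right mult_ac sum.swap[of _ "{..<n}"])
    finally show ?thesis
      using eq[OF that] by simp
  qed
  then show "transpose_mat B * B *\<^sub>v vec n x = \<mu> \<cdot>\<^sub>v vec n x"
    by (intro eq_vecI) (simp_all add: B_def)
qed

lemma rayleigh_bound_by_eigenvalue:
  fixes b :: "nat \<Rightarrow> nat \<Rightarrow> real"
  assumes "n \<ge> 1"
  obtains \<mu> where "eigenvalue (transpose_mat (mat m n (\<lambda>(k, i). b k i)) * mat m n (\<lambda>(k, i). b k i)) \<mu>"
    "0 \<le> \<mu>" "\<And>z. (\<Sum>k<m. (\<Sum>i<n. b k i * z i)\<^sup>2) \<le> \<mu> * (\<Sum>i<n. (z i)\<^sup>2)"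
proof -
  obtain x where unit: "(\<Sum>i<n. (x i)\<^sup>2) = 1"
    and max: "\<And>z. (\<Sum>k<m. (\<Sum>i<n. b k i * z i)\<^sup>2) \<le> (\<Sum>k<m. (\<Sum>i<n. b k i * x i)\<^sup>2) * (\<Sum>i<n. (z i)\<^sup>2)"
    using rayleigh_maximizer_exists[OF assms] by blast
  obtain i where "i < n" "x i \<noteq> 0"
    using unit by (metis (no_types, lifting) lessThan_iff sum.neutral zero_neq_one zero_power2)
  have "(\<Sum>k<m. b k j * (\<Sum>i<n. b k i * x i)) = (\<Sum>k<m. (\<Sum>i<n. b k i * x i)\<^sup>2) * x j"
    if "j < n" for j
    using rayleigh_maximizer_eigenvector[OF max _ that] unit by simp
  show thesis
  proof (rule that)
    show "eigenvalue (transpose_mat (mat m n (\<lambda>(k, i). b k i)) * mat m n (\<lambda>(k, i). b k i))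
        (\<Sum>k<m. (\<Sum>i<n. b k i * x i)\<^sup>2)"
      by (rule eigenvalue_transpose_mult_matI[where x = x, OF \<open>i < n\<close> \<open>x i \<noteq> 0\<close>]) fact
    show "0 \<le> (\<Sum>k<m. (\<Sum>i<n. b k i * x i)\<^sup>2)"
      by (simp add: sum_nonneg)
  qed (rule max)
qed

lemma E_mat_carrier: "E_mat n \<in> carrier_mat n n"
  by (simp add: E_mat_def)

lemma eigenvalue_le_T_n:
  assumes "eigenvalue (transpose_mat (E_mat n) * E_mat n) \<mu>"
  shows "\<mu> \<le> T_n n"
proof -
  have "transpose_mat (E_mat n) * E_mat n \<in> carrier_mat n n"
    using E_mat_carrier[of n] by simp
  then have "finite (spectrum (transpose_mat (E_mat n) * E_mat n))"
    by (rule card_finite_spectrum(1))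
  then show ?thesis
    unfolding T_n_def spectrum_def by (rule Max_ge) (simp add: assms)
qed

lemma T_n_nonneg_and_bound:
  assumes "n \<ge> 1"
  shows T_n_nonneg: "0 \<le> T_n n"
    and sum_sq_E_le_T_n: "(\<Sum>k<n. (\<Sum>i<n. E_entry k i * y i)\<^sup>2) \<le> T_n n * (\<Sum>i<n. (y i)\<^sup>2)"
proof -
  obtain \<mu> where "eigenvalue (transpose_mat (E_mat n) * E_mat n) \<mu>" "0 \<le> \<mu>"
    and bound: "\<And>z. (\<Sum>k<n. (\<Sum>i<n. E_entry k i * z i)\<^sup>2) \<le> \<mu> * (\<Sum>i<n. (z i)\<^sup>2)"
    using rayleigh_bound_by_eigenvalue[OF assms, of n E_entry, folded E_mat_eq] by blast
  from this(1) have "\<mu> \<le> T_n n"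
    by (rule eigenvalue_le_T_n)
  then show "0 \<le> T_n n"
    using \<open>0 \<le> \<mu>\<close> by linarith
  have "0 \<le> (\<Sum>i<n. (y i)\<^sup>2)"
    by (simp add: sum_nonneg)
  show "(\<Sum>k<n. (\<Sum>i<n. E_entry k i * y i)\<^sup>2) \<le> T_n n * (\<Sum>i<n. (y i)\<^sup>2)"
    using bound[of y] mult_right_mono[OF \<open>\<mu> \<le> T_n n\<close> \<open>0 \<le> (\<Sum>i<n. (y i)\<^sup>2)\<close>] by linarith
qed

lemma complex_sum_sq_bound:
  fixes b :: "nat \<Rightarrow> nat \<Rightarrow> real" and w :: "nat \<Rightarrow> complex"
  assumes bound: "\<And>y. (\<Sum>k<m. (\<Sum>i<n. b k i * y i)\<^sup>2) \<le> c * (\<Sum>i<n. (y i)\<^sup>2)"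
  shows "(\<Sum>k<m. (cmod (\<Sum>i<n. of_real (b k i) * w i))\<^sup>2) \<le> c * (\<Sum>i<n. (cmod (w i))\<^sup>2)"
proof -
  have "(\<Sum>k<m. (cmod (\<Sum>i<n. of_real (b k i) * w i))\<^sup>2)
      = (\<Sum>k<m. (\<Sum>i<n. b k i * Re (w i))\<^sup>2) + (\<Sum>k<m. (\<Sum>i<n. b k i * Im (w i))\<^sup>2)"
    by (simp add: cmod_power2 sum.distrib)
  also have "\<dots> \<le> c * (\<Sum>i<n. (Re (w i))\<^sup>2) + c * (\<Sum>i<n. (Im (w i))\<^sup>2)"
    by (intro add_mono bound)
  also have "\<dots> = c * (\<Sum>i<n. (cmod (w i))\<^sup>2)"
    by (simp add: cmod_power2 sum.distrib distrib_left)
  finally show ?thesis .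
qed

lemma complex_sum_sq_transpose_bound:
  fixes b :: "nat \<Rightarrow> nat \<Rightarrow> real" and u :: "nat \<Rightarrow> complex"
  assumes "0 \<le> c" and bound: "\<And>y. (\<Sum>k<m. (\<Sum>i<n. b k i * y i)\<^sup>2) \<le> c * (\<Sum>i<n. (y i)\<^sup>2)"
  shows "(\<Sum>i<n. (cmod (\<Sum>k<m. of_real (b k i) * u k))\<^sup>2) \<le> c * (\<Sum>k<m. (cmod (u k))\<^sup>2)"
proof -
  define w where "w i = (\<Sum>k<m. of_real (b k i) * u k)" for i
  define z where "z k = (\<Sum>i<n. of_real (b k i) * w i)" for k
  define W where "W = (\<Sum>i<n. (cmod (w i))\<^sup>2)"
  define U where "U = (\<Sum>k<m. (cmod (u k))\<^sup>2)"
  define Z where "Z = (\<Sum>k<m. (cmod (z k))\<^sup>2)"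
  have "W \<ge> 0" "U \<ge> 0"
    unfolding W_def U_def by (simp_all add: sum_nonneg)
  \<comment> \<open>\<open>W = \<langle>u, B w\<rangle>\<close>, so Cauchy--Schwarz and the bound for \<open>B\<close> give \<open>W\<^sup>2 \<le> U Z \<le> c U W\<close>\<close>
  have "of_real W = (\<Sum>i<n. \<Sum>k<m. u k * (of_real (b k i) * cnj (w i)))"
    unfolding W_def of_real_sum complex_norm_square
    by (intro sum.cong refl, subst (1) w_def) (simp add: sum_distrib_left sum_distrib_right mult_ac)
  also have "\<dots> = (\<Sum>k<m. u k * cnj (z k))"
    by (subst sum.swap) (simp add: z_def sum_distrib_left)
  finally have "W = Re (\<Sum>k<m. u k * cnj (z k))"
    by (metis Re_complex_of_real)
  also have "\<dots> \<le> cmod (\<Sum>k<m. u k * cnj (z k))"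
    by (rule complex_Re_le_cmod)
  also have "\<dots> \<le> (\<Sum>k<m. cmod (u k * cnj (z k)))"
    by (rule norm_sum)
  also have "\<dots> = (\<Sum>k<m. cmod (u k) * cmod (z k))"
    by (simp add: norm_mult)
  finally have "W\<^sup>2 \<le> (\<Sum>k<m. cmod (u k) * cmod (z k))\<^sup>2"
    using \<open>W \<ge> 0\<close> by (simp add: power_mono)
  also have "\<dots> \<le> U * Z"
    unfolding U_def Z_def by (rule Cauchy_Schwarz_ineq_sum)
  also have "\<dots> \<le> U * (c * W)"
    using complex_sum_sq_bound[OF bound, of w] \<open>U \<ge> 0\<close>
    unfolding Z_def W_def z_def by (intro mult_left_mono)
  finally have WW: "W * W \<le> (c * U) * W"
    by (simp add: power2_eq_square mult_ac)
  have "W \<le> c * U"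
  proof (cases "W = 0")
    case True
    then show ?thesis
      using \<open>0 \<le> c\<close> \<open>U \<ge> 0\<close> by simp
  next
    case False
    then show ?thesis
      using mult_right_le_imp_le[OF WW] \<open>W \<ge> 0\<close> by simp
  qed
  then show ?thesis
    unfolding W_def U_def w_def .
qed

lemma eigenvector_rayleigh_identity:
  fixes A :: "real mat"
  assumes "A \<in> carrier_mat n n" and "eigenvalue (map_mat complex_of_real A) l"
  obtains v :: "nat \<Rightarrow> complex" where "(\<Sum>i<n. (cmod (v i))\<^sup>2) > 0"
    "l * of_real (\<Sum>i<n. (cmod (v i))\<^sup>2) = (\<Sum>i<n. cnj (v i) * (\<Sum>j<n. of_real (A $$ (i, j)) * v j))"
proof -
  obtain x where x: "x \<in> carrier_vec n" "x \<noteq> 0\<^sub>v n" "map_mat complex_of_real A *\<^sub>v x = l \<cdot>\<^sub>v x"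
    using assms unfolding eigenvalue_def eigenvector_def by auto
  have eq: "(\<Sum>j<n. of_real (A $$ (i, j)) * x $ j) = l * x $ i" if "i < n" for i
    using arg_cong[OF x(3), of "\<lambda>y. y $ i"] that assms(1) x(1)
    by (simp add: scalar_prod_def lessThan_atLeast0)
  obtain i where "i < n" "x $ i \<noteq> 0"
    using x(1,2) by (metis carrier_vecD eq_vecI index_zero_vec)
  then have "(\<Sum>i<n. (cmod (x $ i))\<^sup>2) > 0"
    by (intro sum_pos2[of _ i]) auto
  moreover have "(\<Sum>i<n. cnj (x $ i) * (\<Sum>j<n. of_real (A $$ (i, j)) * x $ j))
      = (\<Sum>i<n. l * (x $ i * cnj (x $ i)))"
    using eq by (intro sum.cong refl) (simp add: mult_ac)
  moreover have "\<dots> = l * of_real (\<Sum>i<n. (cmod (x $ i))\<^sup>2)"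
    by (simp only: of_real_sum complex_norm_square sum_distrib_left)
  ultimately show thesis
    using that by simp
qed

lemma hermitian_form_congruence:
  fixes a e :: "nat \<Rightarrow> nat \<Rightarrow> real" and c t :: "nat \<Rightarrow> real" and v :: "nat \<Rightarrow> complex"
  assumes "\<And>i j. i < n \<Longrightarrow> j < n \<Longrightarrow> a i j = c i * c j * (\<Sum>d<m. e i d * e j d * t d)"
  shows "(\<Sum>i<n. cnj (v i) * (\<Sum>j<n. of_real (a i j) * v j))
    = of_real (\<Sum>d<m. t d * (cmod (\<Sum>j<n. of_real (e j d) * (of_real (c j) * v j)))\<^sup>2)"
proof -
  define u where "u j = of_real (c j) * v j" for j
  define w where "w d = (\<Sum>j<n. of_real (e j d) * u j)" for d
  have "(\<Sum>i<n. cnj (v i) * (\<Sum>j<n. of_real (a i j) * v j))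
      = (\<Sum>i<n. \<Sum>j<n. \<Sum>d<m. of_real (t d) * ((of_real (e i d) * cnj (u i)) * (of_real (e j d) * u j)))"
    using assms by (intro sum.cong refl)
      (simp add: u_def sum_distrib_left sum_distrib_right mult_ac)
  also have "\<dots> = (\<Sum>d<m. of_real (t d) * (cnj (w d) * w d))"
    unfolding w_def by (simp add: sum_distrib_left sum_distrib_right sum.swap[of _ "{..<m}"] mult_ac)
  also have "\<dots> = of_real (\<Sum>d<m. t d * (cmod (w d))\<^sup>2)"
    by (simp only: of_real_sum of_real_mult complex_norm_square) (simp add: mult_ac)
  finally show ?thesis
    unfolding w_def u_def .
qed

lemma A_mat_eigenvalue_identity:
  assumes "eigenvalue (map_mat complex_of_real (A_mat \<alpha> \<beta> n)) l"
  obtains v :: "nat \<Rightarrow> complex" where "(\<Sum>i<n. (cmod (v i))\<^sup>2) > 0"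
    "l * of_real (\<Sum>i<n. (cmod (v i))\<^sup>2) = of_real (\<Sum>d<n. J_fun (\<alpha> - \<beta>) (Suc d)
        * (cmod (\<Sum>j<n. of_real (E_entry j d) * (of_real (real (Suc j) powr \<beta>) * v j)))\<^sup>2)"
proof -
  have "A_mat \<alpha> \<beta> n \<in> carrier_mat n n"
    by (simp add: A_mat_def)
  then obtain v where pos: "(\<Sum>i<n. (cmod (v i))\<^sup>2) > 0" and eigen:
    "l * of_real (\<Sum>i<n. (cmod (v i))\<^sup>2) = (\<Sum>i<n. cnj (v i) * (\<Sum>j<n. of_real (A_mat \<alpha> \<beta> n $$ (i, j)) * v j))"
    using eigenvector_rayleigh_identity assms by blast
  have "(\<Sum>i<n. cnj (v i) * (\<Sum>j<n. of_real (A_mat \<alpha> \<beta> n $$ (i, j)) * v j))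
      = of_real (\<Sum>d<n. J_fun (\<alpha> - \<beta>) (Suc d)
        * (cmod (\<Sum>j<n. of_real (E_entry j d) * (of_real (real (Suc j) powr \<beta>) * v j)))\<^sup>2)"
    by (rule hermitian_form_congruence) (rule A_mat_entry_eq)
  with pos eigen show thesis
    by (intro that) simp_all
qed

lemma Suc_powr_sq_le:
  assumes "j < n"
  shows "(real (Suc j) powr \<beta>)\<^sup>2 \<le> max 1 (real n powr (2 * \<beta>))"
proof -
  have "(real (Suc j) powr \<beta>)\<^sup>2 = real (Suc j) powr (2 * \<beta>)"
    by (simp add: power2_eq_square powr_add [symmetric])
  also have "\<dots> \<le> max 1 (real n powr (2 * \<beta>))"
  proof (cases "\<beta> \<ge> 0")
    case True
    then show ?thesis
      using assms by (simp add: powr_mono2 max.coboundedI2)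
  next
    case False
    then have "real (Suc j) powr (2 * \<beta>) \<le> 1 powr (2 * \<beta>)"
      by (intro powr_mono2') auto
    then show ?thesis
      by simp
  qed
  finally show ?thesis .
qed

lemma sum_cmod_sq_scaled_le:
  fixes c :: "nat \<Rightarrow> real" and v :: "nat \<Rightarrow> complex"
  assumes "\<And>j. j < n \<Longrightarrow> (c j)\<^sup>2 \<le> C"
  shows "(\<Sum>j<n. (cmod (of_real (c j) * v j))\<^sup>2) \<le> C * (\<Sum>j<n. (cmod (v j))\<^sup>2)"
proof -
  have "(\<Sum>j<n. (cmod (of_real (c j) * v j))\<^sup>2) = (\<Sum>j<n. (c j)\<^sup>2 * (cmod (v j))\<^sup>2)"
    by (simp add: norm_mult power_mult_distrib)
  also have "\<dots> \<le> (\<Sum>j<n. C * (cmod (v j))\<^sup>2)"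
    using assms by (intro sum_mono mult_right_mono) auto
  finally show ?thesis
    by (simp add: sum_distrib_left)
qed

theorem corollary3p3:
  fixes n :: nat and \<alpha> \<beta> :: real and l :: complex
  assumes "n \<ge> 1"
    and "eigenvalue (map_mat complex_of_real (A_mat \<alpha> \<beta> n)) l"
  shows "cmod l \<le> T_n n * max 1 (real n powr (2 * \<beta>))
           * Max ((\<lambda>i. \<bar>J_fun (\<alpha> - \<beta>) i\<bar>) ` {1..n})"
proof -
  define Jmax where "Jmax = Max ((\<lambda>i. \<bar>J_fun (\<alpha> - \<beta>) i\<bar>) ` {1..n})"
  have Jmax: "\<bar>J_fun (\<alpha> - \<beta>) (Suc d)\<bar> \<le> Jmax" if "d < n" for d
    unfolding Jmax_def using that by (intro Max_ge) auto
  have "0 \<le> Jmax"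
    using order_trans[OF abs_ge_zero Jmax[of 0]] assms(1) by simp
  obtain v where pos: "(\<Sum>i<n. (cmod (v i))\<^sup>2) > 0"
    and eigen: "l * of_real (\<Sum>i<n. (cmod (v i))\<^sup>2) = of_real (\<Sum>d<n. J_fun (\<alpha> - \<beta>) (Suc d)
        * (cmod (\<Sum>j<n. of_real (E_entry j d) * (of_real (real (Suc j) powr \<beta>) * v j)))\<^sup>2)"
    by (rule A_mat_eigenvalue_identity[OF assms(2)])
  define u where "u j = of_real (real (Suc j) powr \<beta>) * v j" for j
  define V where "V = (\<Sum>i<n. (cmod (v i))\<^sup>2)"
  have "V > 0"
    using pos unfolding V_def .
  have "cmod l * V = cmod (l * of_real V)"
    using \<open>V > 0\<close> by (simp add: norm_mult)
  also have "\<dots> = \<bar>\<Sum>d<n. J_fun (\<alpha> - \<beta>) (Suc d) * (cmod (\<Sum>j<n. of_real (E_entry j d) * u j))\<^sup>2\<bar>"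
    unfolding V_def eigen u_def norm_of_real ..
  also have "\<dots> \<le> Jmax * (\<Sum>d<n. (cmod (\<Sum>j<n. of_real (E_entry j d) * u j))\<^sup>2)"
    unfolding sum_distrib_left
    by (rule order_trans[OF sum_abs]) (auto simp: abs_mult intro!: sum_mono mult_right_mono Jmax)
  also have "\<dots> \<le> Jmax * (T_n n * (\<Sum>j<n. (cmod (u j))\<^sup>2))"
    using complex_sum_sq_transpose_bound[OF T_n_nonneg sum_sq_E_le_T_n] assms(1) \<open>0 \<le> Jmax\<close>
    by (intro mult_left_mono) auto
  also have "\<dots> \<le> Jmax * (T_n n * (max 1 (real n powr (2 * \<beta>)) * V))"
    unfolding u_def V_def using Suc_powr_sq_le \<open>0 \<le> Jmax\<close> T_n_nonneg[OF assms(1)] assms(1)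
    by (intro mult_left_mono sum_cmod_sq_scaled_le) auto
  finally show ?thesis
    using \<open>V > 0\<close> unfolding Jmax_def by (simp add: mult_ac)
qed

end
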